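(* For every $k\in\mathbb{N}_+$ and $x\in(0,\infty)$: (1) $\mathcal{M}_{k,k}(x)\cdot\mathcal{M}_{k,k}\big(1/s(x)\big)=1$; (2) $\mathcal{M}_{k+1,k}(x)\cdot\mathcal{M}_{k+1,k}(x^{-1})=1$.
   Context: For $x>0$, $\omega=\sqrt{8x+1}$, $c(x)=\frac{(\omega+3)^2}{16}$, $d(x)=\frac{(\omega+3)^2}{8(\omega+1)}$, $s(x)=\frac{(\omega-1)^2}{4(\omega+7)}$; $s_0=\mathrm{id}$, $s_{-1}(x)=1/s(1/x)$, $s_i=s\circ s_{i-1}$, $s_{-i}=s_{-1}\circ s_{-(i-1)}$ ($i\in\mathbb{N}_+$); $c_j=c\circ s_j$, $d_j=d\circ s_j$. Product convention: $\prod_{i=0}^kh_i=h_0\cdots h_k$ for $k\ge0$, $=1$ for $k=-1$, $=h_{k+1}^{-1}\cdots h_{-1}^{-1}$ for $k\le-2$. Let $m^{\rm def}(x)$, $n^{\rm def}(x)$ be the sequences with $m^{\rm def}_{k+1}(x)-m^{\rm def}_k(x)=\prod_{i=0}^k(c_i(x)-1)$, $\lim_{k\to-\infty}m^{\rm def}_k(x)=0$, and $n^{\rm def}_k(x)-n^{\rm def}_{k+1}(x)=x\prod_{i=0}^k(d_i(x)-1)$, $\lim_{k\to\infty}n^{\rm def}_k(x)=0$ (these are the $m,n$ components of the unique positive ABMN solution with $m_{-\infty}=n_\infty=0$, $m_0-m_{-1}=1$ and central ratio $x$). For $p\in\mathbb{N}_+$, $r\in\mathbb{N}_+$, the finite-trail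 Mina margin map is $\mathcal{M}_{p,r}(x)=\frac{n^{\rm def}_{-p}(x)-n^{\rm def}_{r}(x)}{m^{\rm def}_{r}(x)-m^{\rm def}_{-p}(x)}$ (equivalently, this ratio for any ABMN solution on $\llbracket -p+1,r-1\rrbracket$ with central ratio $x$). *)

theory Defs
  imports Complex_Main
begin

definition omg :: "real \<Rightarrow> real" where
  "omg x = sqrt (8 * x + 1)"

definition cfun :: "real \<Rightarrow> real" where
  "cfun x = (omg x + 3)^2 / 16"

definition dfun :: "real \<Rightarrow> real" where
  "dfun x = (omg x + 3)^2 / (8 * (omg x + 1))"

definition sfun :: "real \<Rightarrow> real" where
  "sfun x = (omg x - 1)^2 / (4 * (omg x + 7))"

definition sneg :: "real \<Rightarrow> real" where
  "sneg x = 1 / sfun (1 / x)"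

definition siter :: "int \<Rightarrow> real \<Rightarrow> real" where
  "siter i x = (if 0 \<le> i then (sfun ^^ nat i) x else (sneg ^^ nat (- i)) x)"

definition cj :: "int \<Rightarrow> real \<Rightarrow> real" where
  "cj j x = cfun (siter j x)"

definition dj :: "int \<Rightarrow> real \<Rightarrow> real" where
  "dj j x = dfun (siter j x)"

definition prodc :: "(int \<Rightarrow> real) \<Rightarrow> int \<Rightarrow> real" where
  "prodc h k = (if 0 \<le> k then (\<Prod>i\<in>{0..k}. h i)
                else if k = -1 then 1
                else (\<Prod>i\<in>{k+1..-1}. inverse (h i)))"

definition mdef :: "real \<Rightarrow> int \<Rightarrow> real" where
  "mdef x = (THE m. (\<forall>k. m (k + 1) - m k = prodc (\<lambda>i. cj i x - 1) k)
                    \<and> (m \<longlongrightarrow> 0) at_bot)"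

definition ndef :: "real \<Rightarrow> int \<Rightarrow> real" where
  "ndef x = (THE n. (\<forall>k. n k - n (k + 1) = x * prodc (\<lambda>i. dj i x - 1) k)
                    \<and> (n \<longlongrightarrow> 0) at_top)"

definition Mina :: "nat \<Rightarrow> nat \<Rightarrow> real \<Rightarrow> real" where
  "Mina p r x = (ndef x (- int p) - ndef x (int r)) / (mdef x (int r) - mdef x (- int p))"

end

theory Submission
  imports Defs
begin

text \<open>With \<open>u = \<omega> - 1\<close> one has \<open>x = u(u+2)/8\<close>, and \<open>s\<close>, \<open>c - 1\<close>, \<open>d - 1\<close> become
  rational functions of \<open>u\<close>; passing from \<open>x\<close> to \<open>1/s(x)\<close> replaces \<open>u\<close> by \<open>16/u\<close>.
  Consequently \<open>z \<mapsto> 1/z\<close> conjugates \<open>s\<close> to its inverse, and at the point \<open>1/s\<^sub>a(x)\<close> the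
  factors \<open>c\<^sub>i - 1\<close> are the reciprocals of the factors \<open>d\<^sub>a\<^sub>-\<^sub>1\<^sub>-\<^sub>i - 1\<close> at \<open>x\<close>, and
  vice versa. So the increments of \<open>m\<close> and \<open>n\<close> at \<open>1/s\<^sub>a(x)\<close> are, up to a common
  factor, those of \<open>n\<close> and \<open>m\<close> at \<open>x\<close> read backwards from \<open>a - 1\<close>. On a window of
  indices symmetric about \<open>(a - 1)/2\<close> the two sums forming the margin map are exchanged,
  which yields the product formula; \<open>a = 1\<close> gives (1), using
  \<open>x (d(x) - 1) = s(x) (c(x) - 1)\<close>, and \<open>a = 0\<close> gives (2).\<close>

section \<open>The parametrisation \<open>u = \<omega> - 1\<close>\<close>

lemma omg_param:
  assumes "u \<ge> 0"
  shows "omg (u * (u + 2) / 8) = u + 1"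
proof -
  have "8 * (u * (u + 2) / 8) + 1 = (u + 1)\<^sup>2" by (simp add: power2_eq_square algebra_simps)
  then show ?thesis unfolding omg_def using assms by simp
qed

lemma param_exists:
  fixes z :: real
  assumes "z > 0"
  obtains u where "u > 0" "z = u * (u + 2) / 8"
proof
  have om: "omg z > 1" "(omg z)\<^sup>2 = 8 * z + 1"
    unfolding omg_def using assms by (simp_all add: real_less_rsqrt)
  then show "omg z - 1 > 0" by simp
  show "z = (omg z - 1) * (omg z - 1 + 2) / 8"
    using om(2) by (simp add: power2_eq_square algebra_simps)
qed

lemma
  assumes "u \<ge> 0"
  shows sfun_param: "sfun (u * (u + 2) / 8) = u\<^sup>2 / (4 * (u + 8))"
    and cfun_param: "cfun (u * (u + 2) / 8) - 1 = u * (u + 8) / 16"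
    and dfun_param: "dfun (u * (u + 2) / 8) - 1 = u\<^sup>2 / (8 * (u + 2))"
  using assms unfolding sfun_def cfun_def dfun_def omg_param[OF assms]
  by (simp_all add: field_simps power2_eq_square)

lemma inverse_sfun_param:
  assumes "u > 0"
  shows "1 / sfun (u * (u + 2) / 8) = 16 / u * (16 / u + 2) / 8"
  using assms unfolding sfun_param[OF less_imp_le[OF assms]]
  by (simp add: divide_simps power2_eq_square)

lemma sfun_inverse_sfun:
  assumes "z > 0"
  shows "sfun (1 / sfun z) = 1 / z"
proof -
  obtain u where u: "u > 0" "z = u * (u + 2) / 8" using param_exists[OF assms] .
  have v: "16 / u \<ge> 0" using u by simp
  show ?thesis
    unfolding u(2) inverse_sfun_param[OF u(1)] sfun_param[OF v] using u(1)
    by (simp add: divide_simps power2_eq_square)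
qed

lemma cfun_dfun_inverse_sfun:
  assumes "z > 0"
  shows "(cfun z - 1) * (dfun (1 / sfun z) - 1) = 1"
proof -
  obtain u where u: "u > 0" "z = u * (u + 2) / 8" using param_exists[OF assms] .
  have v: "16 / u \<ge> 0" using u by simp
  show ?thesis
    unfolding u(2) inverse_sfun_param[OF u(1)] dfun_param[OF v] cfun_param[OF less_imp_le[OF u(1)]]
    using u(1) by (simp add: divide_simps power2_eq_square)
qed

lemma dfun_cfun_inverse_sfun:
  assumes "z > 0"
  shows "(dfun z - 1) * (cfun (1 / sfun z) - 1) = 1"
proof -
  obtain u where u: "u > 0" "z = u * (u + 2) / 8" using param_exists[OF assms] .
  have v: "16 / u \<ge> 0" using u by simp
  show ?thesis
    unfolding u(2) inverse_sfun_param[OF u(1)] cfun_param[OF v] dfun_param[OF less_imp_le[OF u(1)]]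
    using u(1) by (simp add: divide_simps power2_eq_square)
qed

lemma dfun_cfun_ratio:
  assumes "z > 0"
  shows "z * (dfun z - 1) = sfun z * (cfun z - 1)"
proof -
  obtain u where u: "u > 0" "z = u * (u + 2) / 8" using param_exists[OF assms] .
  then show ?thesis
    unfolding u(2) sfun_param[OF less_imp_le[OF u(1)]] cfun_param[OF less_imp_le[OF u(1)]]
      dfun_param[OF less_imp_le[OF u(1)]]
    by (simp add: divide_simps power2_eq_square) (simp add: algebra_simps)
qed

lemma
  assumes "z > 0"
  shows sfun_pos: "sfun z > 0"
    and sfun_le: "sfun z \<le> z / 9"
    and cfun_gt_one: "cfun z > 1"
    and dfun_gt_one: "dfun z > 1"
    and cfun_minus_one_ge: "cfun z - 1 \<ge> z / 2"
proof -
  obtain u where u: "u > 0" "z = u * (u + 2) / 8" using param_exists[OF assms] .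
  have s: "sfun z = u\<^sup>2 / (4 * (u + 8))" and c: "cfun z - 1 = u * (u + 8) / 16"
    and d: "dfun z - 1 = u\<^sup>2 / (8 * (u + 2))"
    unfolding u(2) using sfun_param cfun_param dfun_param u(1) by simp_all
  show "sfun z > 0" unfolding s using u(1) by simp
  show "cfun z > 1" using c u(1) by (smt (verit) divide_pos_pos mult_pos_pos)
  show "dfun z > 1" using d u(1) by (smt (verit) divide_pos_pos zero_less_power)
  show "cfun z - 1 \<ge> z / 2" unfolding c using u(1) by (simp add: u(2) field_simps)
  have "0 \<le> u * (u - 4)\<^sup>2" using u(1) by simp
  then show "sfun z \<le> z / 9"
    unfolding s using u(1) by (simp add: u(2) divide_simps power2_eq_square algebra_simps)
qed

lemma sneg_pos: "z > 0 \<Longrightarrow> sneg z > 0"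
  unfolding sneg_def using sfun_pos[of "1 / z"] by simp

lemma sfun_sneg: "z > 0 \<Longrightarrow> sfun (sneg z) = z"
  unfolding sneg_def using sfun_inverse_sfun[of "1 / z"] by simp

lemma sneg_sfun: "z > 0 \<Longrightarrow> sneg (sfun z) = z"
  unfolding sneg_def using sfun_inverse_sfun[of z] by simp

lemma sneg_ge: "z > 0 \<Longrightarrow> 9 * z \<le> sneg z"
  unfolding sneg_def using sfun_le[of "1 / z"] sfun_pos[of "1 / z"] by (simp add: field_simps)

lemma siter_pos: "x > 0 \<Longrightarrow> siter i x > 0"
proof -
  assume x: "x > 0"
  have "(sfun ^^ n) x > 0" "(sneg ^^ n) x > 0" for n
    by (induction n) (simp_all add: x sfun_pos sneg_pos)
  then show ?thesis unfolding siter_def by simp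
qed

lemma siter_0 [simp]: "siter 0 x = x"
  unfolding siter_def by simp

lemma siter_1 [simp]: "siter 1 x = sfun x"
  unfolding siter_def by simp

lemma siter_minus_nat: "siter (- int n) x = (sneg ^^ n) x"
  unfolding siter_def by auto

lemma siter_succ:
  assumes "x > 0"
  shows "siter (i + 1) x = sfun (siter i x)"
proof (cases "i \<ge> 0")
  case True
  then have "nat (i + 1) = Suc (nat i)" by simp
  then show ?thesis unfolding siter_def using True by simp
next
  case False
  define n where "n = nat (- i - 1)"
  have n: "i = - int (Suc n)" using False unfolding n_def by simp
  have "siter i x = sneg (siter (- int n) x)"
    unfolding n siter_minus_nat by simp
  moreover have "i + 1 = - int n" using n by simp
  ultimately have "siter i x = sneg (siter (i + 1) x)" by simp
  then show ?thesis using sfun_sneg siter_pos[OF assms] by simp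
qed

lemma siter_pred:
  assumes "x > 0"
  shows "siter (i - 1) x = sneg (siter i x)"
  using siter_succ[OF assms, of "i - 1"] sneg_sfun[OF siter_pos[OF assms]] by simp

lemma siter_unique:
  assumes "x > 0" "g 0 = x" "\<And>i. g (i + 1) = sfun (g i)" "\<And>i. g i > 0"
  shows "g i = siter i x"
proof (induction i rule: int_induct[where k = 0])
  case (step2 i)
  have "g (i - 1) = sneg (g i)" using assms(3)[of "i - 1"] sneg_sfun[OF assms(4)] by simp
  then show ?case using step2 siter_pred[OF assms(1)] by simp
qed (use assms siter_succ in simp_all)

lemma siter_reflect:
  assumes "x > 0"
  shows "siter i (1 / siter a x) = 1 / siter (a - i) x"
proof -
  have "1 / siter (a - i) x = siter i (1 / siter a x)"
  proof (rule siter_unique)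
    fix i
    have "siter (a - i) x = sfun (siter (a - (i + 1)) x)"
      using siter_succ[OF assms, of "a - (i + 1)"] by simp
    then show "1 / siter (a - (i + 1)) x = sfun (1 / siter (a - i) x)"
      using sfun_inverse_sfun siter_pos[OF assms] by simp
  qed (simp_all add: siter_pos[OF assms])
  then show ?thesis by simp
qed

lemma siter_minus_nat_ge:
  assumes "x > 0"
  shows "9 ^ n * x \<le> siter (- int n) x"
  unfolding siter_minus_nat
proof (induction n)
  case (Suc n)
  have "9 ^ Suc n * x \<le> 9 * (sneg ^^ n) x" using Suc by simp
  also have "\<dots> \<le> sneg ((sneg ^^ n) x)"
    using sneg_ge siter_pos[OF assms, of "- int n"] unfolding siter_minus_nat by blast
  finally show ?case by simp
qed simp

lemma prodc_minus_one [simp]: "prodc h (- 1) = 1"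
  unfolding prodc_def by simp

lemma prodc_0 [simp]: "prodc h 0 = h 0"
  unfolding prodc_def by simp

lemma prodc_step:
  assumes "h j \<noteq> 0"
  shows "prodc h j = prodc h (j - 1) * h j"
proof -
  consider "j \<ge> 1" | "j = 0" | "j = - 1" | "j \<le> - 2" by linarith
  then show ?thesis
  proof cases
    case 1
    then have "{0..j} = insert j {0..j - 1}" by auto
    then show ?thesis unfolding prodc_def using 1 by (simp add: mult.commute)
  next
    case 4
    then have "{j..- 1} = insert j {j + 1..- 1}" by auto
    then have "prodc h (j - 1) = inverse (h j) * prodc h j"
      unfolding prodc_def using 4 by simp
    then show ?thesis using assms by simp
  qed (use assms in \<open>simp_all add: prodc_def\<close>)
qed

lemma prodc_nonzero: "(\<And>i. h i \<noteq> 0) \<Longrightarrow> prodc h j \<noteq> 0"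
  unfolding prodc_def by auto

lemma prodc_pos: "(\<And>i. h i > 0) \<Longrightarrow> prodc h j > 0"
  unfolding prodc_def by (auto intro!: prod_pos)

lemma prodc_unique:
  assumes "\<And>i. h i \<noteq> 0" "Q (- 1) = 1" "\<And>j. Q j = Q (j - 1) * h j"
  shows "Q j = prodc h j"
proof (induction j rule: int_induct[where k = "- 1"])
  case (step1 i)
  then show ?case using assms(3)[of "i + 1"] prodc_step[of h "i + 1", OF assms(1)] by simp
next
  case (step2 i)
  then show ?case using assms(3)[of i] prodc_step[of h i, OF assms(1)] assms(1)[of i] by simp
qed (use assms(2) in simp)

lemma prodc_reflect:
  assumes "\<And>i. h i \<noteq> 0"
  shows "prodc (\<lambda>i. inverse (h (b - i))) j = prodc h (b - j - 1) / prodc h b"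
proof (rule prodc_unique[symmetric])
  fix j
  have "prodc h (b - (j - 1) - 1) = prodc h (b - j - 1) * h (b - j)"
    using prodc_step[of h "b - j", OF assms] by simp
  then show "prodc h (b - j - 1) / prodc h b
      = prodc h (b - (j - 1) - 1) / prodc h b * inverse (h (b - j))"
    using assms[of "b - j"] by simp
qed (simp_all add: assms prodc_nonzero)

section \<open>Sequences with prescribed differences vanishing at infinity\<close>

lemma sum_int_telescope:
  fixes m :: "int \<Rightarrow> 'a::ab_group_add"
  assumes "a \<le> b"
  shows "(\<Sum>k\<in>{a..<b}. m (k + 1) - m k) = m b - m a"
  using assms
proof (induction b rule: int_ge_induct)
  case (step i)
  then have "{a..<i + 1} = insert i {a..<i}" by auto
  then show ?case using step by simp
qed simp

lemma summable_int_shift: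
  fixes f :: "int \<Rightarrow> 'a::real_normed_vector"
  shows "summable (\<lambda>n. f (k + int n)) \<longleftrightarrow> summable (\<lambda>n. f (l + int n))"
proof -
  have shift: "summable (\<lambda>n. f (c + int d + int n)) \<longleftrightarrow> summable (\<lambda>n. f (c + int n))" for c d
    using summable_iff_shift[of "\<lambda>n. f (c + int n)" d] by (simp add: ac_simps)
  have "k = min k l + int (nat (k - min k l))" "l = min k l + int (nat (l - min k l))" by simp_all
  then show ?thesis by (metis shift)
qed

lemma antidifference_at_top_exists:
  fixes g :: "int \<Rightarrow> 'a::real_normed_vector"
  assumes "summable (\<lambda>n. g (int n))"
  defines "n \<equiv> \<lambda>k. \<Sum>i. g (k + int i)"
  shows "n k - n (k + 1) = g k" and "(n \<longlongrightarrow> 0) at_top"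
proof -
  have sm: "summable (\<lambda>i. g (k + int i))" for k
    using assms(1) summable_int_shift[of g k 0] by simp
  show "n k - n (k + 1) = g k"
    using suminf_split_head[OF sm[of k]] unfolding n_def by (simp add: add.assoc)
  have tail: "n (int N) = (\<Sum>i. g (int i)) - (\<Sum>i<N. g (int i))" for N
    using suminf_minus_initial_segment[OF assms(1), of N] unfolding n_def by (simp add: add.commute)
  have "(\<lambda>N. n (int N)) \<longlonglongrightarrow> (\<Sum>i. g (int i)) - (\<Sum>i. g (int i))"
    unfolding tail by (intro tendsto_diff tendsto_const summable_LIMSEQ assms(1))
  then have "((\<lambda>k. n (int (nat k))) \<longlongrightarrow> 0) at_top"
    using filterlim_compose[OF _ filterlim_nat_sequentially] by fastforce
  moreover have "eventually (\<lambda>k. n (int (nat k)) = n k) at_top"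
    by (rule eventually_at_top_linorderI[of 0]) simp
  ultimately show "(n \<longlongrightarrow> 0) at_top" by (rule tendsto_cong[THEN iffD1, rotated])
qed

lemma antidifference_at_top_unique:
  fixes n n' :: "int \<Rightarrow> 'a::real_normed_vector"
  assumes "\<And>k. n k - n (k + 1) = n' k - n' (k + 1)"
    and "(n \<longlongrightarrow> 0) at_top" "(n' \<longlongrightarrow> 0) at_top"
  shows "n = n'"
proof -
  define d where "d k = n k - n' k" for k
  have step: "d (k + 1) = d k" for k
    using assms(1)[of k] unfolding d_def by (simp add: algebra_simps)
  have const: "d k = d 0" for k
    by (induction k rule: int_induct[where k = 0]) (use step[of "_ - 1"] step in simp_all)
  have "(d \<longlongrightarrow> 0) at_top"
    using tendsto_diff[OF assms(2,3)] unfolding d_def[abs_def] by simp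
  moreover have "d = (\<lambda>_. d 0)" using const by (intro ext)
  ultimately have "((\<lambda>_::int. d 0) \<longlongrightarrow> 0) at_top" by metis
  then have "d 0 = 0" by (simp add: tendsto_const_iff)
  then show ?thesis using const unfolding d_def by auto
qed

lemma ex1_antidifference_at_top:
  fixes g :: "int \<Rightarrow> 'a::real_normed_vector"
  assumes "summable (\<lambda>n. g (int n))"
  shows "\<exists>!n. (\<forall>k. n k - n (k + 1) = g k) \<and> (n \<longlongrightarrow> 0) at_top"
proof (rule ex1I[of _ "\<lambda>k. \<Sum>i. g (k + int i)"])
  fix n assume "(\<forall>k. n k - n (k + 1) = g k) \<and> (n \<longlongrightarrow> 0) at_top"
  then show "n = (\<lambda>k. \<Sum>i. g (k + int i))"
    using antidifference_at_top_exists[OF assms] by (intro antidifference_at_top_unique) auto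
qed (use antidifference_at_top_exists[OF assms] in auto)

lemma ex1_antidifference_at_bot:
  fixes f :: "int \<Rightarrow> 'a::real_normed_vector"
  assumes "summable (\<lambda>n. f (- int n - 1))"
  shows "\<exists>!m. (\<forall>k. m (k + 1) - m k = f k) \<and> (m \<longlongrightarrow> 0) at_bot"
proof -
  have mirror: "(m \<longlongrightarrow> 0) at_bot \<longleftrightarrow> ((\<lambda>k. m (- k)) \<longlongrightarrow> 0) at_top" for m :: "int \<Rightarrow> 'a"
    unfolding at_bot_mirror filterlim_filtermap ..
  obtain n where n: "\<forall>k. n k - n (k + 1) = f (- k - 1)" "(n \<longlongrightarrow> 0) at_top"
    and uniq: "\<And>n'. (\<forall>k. n' k - n' (k + 1) = f (- k - 1)) \<and> (n' \<longlongrightarrow> 0) at_top \<Longrightarrow> n' = n"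
    using ex1_antidifference_at_top[of "\<lambda>k. f (- k - 1)"] assms by auto
  show ?thesis
  proof (rule ex1I[of _ "\<lambda>k. n (- k)"])
    have "n (- (k + 1)) - n (- k) = f k" for k
      using n(1)[rule_format, of "- k - 1"] by simp
    then show "(\<forall>k. n (- (k + 1)) - n (- k) = f k) \<and> ((\<lambda>k. n (- k)) \<longlongrightarrow> 0) at_bot"
      unfolding mirror using n(2) by simp
  next
    fix m assume m: "(\<forall>k. m (k + 1) - m k = f k) \<and> (m \<longlongrightarrow> 0) at_bot"
    have "m (- k) - m (- (k + 1)) = f (- k - 1)" for k
      using m[THEN conjunct1, rule_format, of "- k - 1"] by simp
    then have "(\<lambda>k. m (- k)) = n" using m unfolding mirror by (intro uniq) simp
    then show "m = (\<lambda>k. n (- k))" by force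
  qed
qed

section \<open>The margin map\<close>

definition cprod :: "real \<Rightarrow> int \<Rightarrow> real" where
  "cprod x = prodc (\<lambda>i. cj i x - 1)"

definition dprod :: "real \<Rightarrow> int \<Rightarrow> real" where
  "dprod x = prodc (\<lambda>i. dj i x - 1)"

lemma cj_minus_one_pos: "x > 0 \<Longrightarrow> cj i x - 1 > 0"
  unfolding cj_def using cfun_gt_one siter_pos by simp

lemma dj_minus_one_pos: "x > 0 \<Longrightarrow> dj i x - 1 > 0"
  unfolding dj_def using dfun_gt_one siter_pos by simp

lemma cprod_pos: "x > 0 \<Longrightarrow> cprod x j > 0"
  unfolding cprod_def by (rule prodc_pos) (rule cj_minus_one_pos)

lemma dprod_pos: "x > 0 \<Longrightarrow> dprod x j > 0"
  unfolding dprod_def by (rule prodc_pos) (rule dj_minus_one_pos)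

lemma cprod_reflect:
  assumes "x > 0"
  shows "cprod (1 / siter a x) j = dprod x (a - 2 - j) / dprod x (a - 1)"
proof -
  have "cj i (1 / siter a x) - 1 = inverse (dj (a - 1 - i) x - 1)" for i
  proof -
    have "siter (a - i) x = sfun (siter (a - 1 - i) x)"
      using siter_succ[OF assms, of "a - 1 - i"] by simp
    then have "cj i (1 / siter a x) = cfun (1 / sfun (siter (a - 1 - i) x))"
      unfolding cj_def siter_reflect[OF assms] by simp
    then show ?thesis
      using inverse_unique[OF dfun_cfun_inverse_sfun[OF siter_pos[OF assms, of "a - 1 - i"]]]
      unfolding dj_def by simp
  qed
  then have "cprod (1 / siter a x) = prodc (\<lambda>i. inverse (dj (a - 1 - i) x - 1))"
    unfolding cprod_def by simp
  then show ?thesis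
    unfolding dprod_def using prodc_reflect[of "\<lambda>i. dj i x - 1" "a - 1" j] dj_minus_one_pos[OF assms]
    by (simp add: less_imp_neq[symmetric] diff_diff_eq)
qed

lemma dprod_reflect:
  assumes "x > 0"
  shows "dprod (1 / siter a x) j = cprod x (a - 2 - j) / cprod x (a - 1)"
proof -
  have "dj i (1 / siter a x) - 1 = inverse (cj (a - 1 - i) x - 1)" for i
  proof -
    have "siter (a - i) x = sfun (siter (a - 1 - i) x)"
      using siter_succ[OF assms, of "a - 1 - i"] by simp
    then have "dj i (1 / siter a x) = dfun (1 / sfun (siter (a - 1 - i) x))"
      unfolding dj_def siter_reflect[OF assms] by simp
    then show ?thesis
      using inverse_unique[OF cfun_dfun_inverse_sfun[OF siter_pos[OF assms, of "a - 1 - i"]]]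
      unfolding cj_def by simp
  qed
  then have "dprod (1 / siter a x) = prodc (\<lambda>i. inverse (cj (a - 1 - i) x - 1))"
    unfolding dprod_def by simp
  then show ?thesis
    unfolding cprod_def using prodc_reflect[of "\<lambda>i. cj i x - 1" "a - 1" j] cj_minus_one_pos[OF assms]
    by (simp add: less_imp_neq[symmetric] diff_diff_eq)
qed

text \<open>Towards \<open>-\<infinity>\<close> the factors \<open>c\<^sub>i - 1\<close> grow at least like \<open>9\<^sup>-\<^sup>i\<close>, so the
  products over negative indices decay geometrically.\<close>

lemma cprod_summable:
  assumes x: "x > 0"
  shows "summable (\<lambda>n. cprod x (- int n - 1))"
proof -
  obtain N where N: "4 / x < 9 ^ N" using real_arch_pow[of 9 "4 / x"] by auto
  have ratio: "cprod x (- int (Suc n) - 1) \<le> 1 / 2 * cprod x (- int n - 1)" if "n \<ge> N" for n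
  proof -
    have "4 \<le> 9 ^ N * x" using N x by (simp add: field_simps)
    also have "\<dots> \<le> 9 ^ Suc n * x" using that x by (intro mult_right_mono power_increasing) auto
    also have "\<dots> \<le> siter (- int (Suc n)) x" by (rule siter_minus_nat_ge[OF x])
    also have "\<dots> = siter (- int n - 1) x" by (rule arg_cong[where f = "\<lambda>i. siter i x"]) simp
    also have "\<dots> \<le> 2 * (cj (- int n - 1) x - 1)"
      using cfun_minus_one_ge[OF siter_pos[OF x, of "- int n - 1"]] unfolding cj_def by simp
    finally have "2 \<le> cj (- int n - 1) x - 1" by simp
    moreover have "cprod x (- int n - 1) = cprod x (- int (Suc n) - 1) * (cj (- int n - 1) x - 1)"
      unfolding cprod_def using prodc_step[of "\<lambda>i. cj i x - 1" "- int n - 1"] cj_minus_one_pos[OF x]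
      by (simp add: less_imp_neq[symmetric] algebra_simps)
    ultimately show ?thesis using cprod_pos[OF x, of "- int (Suc n) - 1"]
      by (simp add: mult_left_mono)
  qed
  show ?thesis
    by (rule summable_ratio_test[of "1 / 2" N]) (use ratio cprod_pos[OF x] in \<open>auto simp: less_imp_le\<close>)
qed

lemma dprod_summable:
  assumes "x > 0"
  shows "summable (\<lambda>n. dprod x (int n))"
proof -
  have "dprod x (int n) = cprod (1 / x) (- int (Suc n) - 1)" for n
  proof -
    have "- int (Suc n) - 1 = - 2 - int n" by simp
    then show ?thesis
      unfolding \<open>- int (Suc n) - 1 = - 2 - int n\<close>
      using dprod_reflect[of "1 / x" 0 "int n"] assms by (simp add: cprod_def)
  qed
  moreover have "summable (\<lambda>n. cprod (1 / x) (- int (Suc n) - 1))"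
    using cprod_summable[of "1 / x"] assms
      summable_Suc_iff[where f = "\<lambda>n. cprod (1 / x) (- int n - 1)"] by simp
  ultimately show ?thesis by simp
qed

lemma mdef_diff:
  assumes "x > 0"
  shows "mdef x (k + 1) - mdef x k = cprod x k"
proof -
  have "\<exists>!m. (\<forall>k. m (k + 1) - m k = prodc (\<lambda>i. cj i x - 1) k) \<and> (m \<longlongrightarrow> 0) at_bot"
    using ex1_antidifference_at_bot[OF cprod_summable[OF assms]] unfolding cprod_def .
  from theI'[OF this] show ?thesis unfolding mdef_def cprod_def by blast
qed

lemma ndef_diff:
  assumes "x > 0"
  shows "ndef x k - ndef x (k + 1) = x * dprod x k"
proof -
  have "summable (\<lambda>n. x * dprod x (int n))"
    using dprod_summable[OF assms] by (rule summable_mult)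
  then have "\<exists>!n. (\<forall>k. n k - n (k + 1) = x * prodc (\<lambda>i. dj i x - 1) k) \<and> (n \<longlongrightarrow> 0) at_top"
    using ex1_antidifference_at_top[of "\<lambda>k. x * dprod x k"] unfolding dprod_def by simp
  from theI'[OF this] show ?thesis unfolding ndef_def dprod_def by blast
qed

lemma Mina_eq_sum_ratio:
  assumes "x > 0"
  shows "Mina p r x = x * sum (dprod x) {- int p..<int r} / sum (cprod x) {- int p..<int r}"
proof -
  have window: "- int p \<le> int r" by simp
  have "mdef x (int r) - mdef x (- int p) = sum (cprod x) {- int p..<int r}"
    using sum_int_telescope[OF window, of "mdef x"] mdef_diff[OF assms] by simp
  moreover have "ndef x (- int p) - ndef x (int r) = x * sum (dprod x) {- int p..<int r}"
    using sum_int_telescope[OF window, of "\<lambda>k. - ndef x k"] ndef_diff[OF assms]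
    by (simp add: sum_distrib_left)
  ultimately show ?thesis unfolding Mina_def by simp
qed

lemma sum_int_reflect:
  fixes g :: "int \<Rightarrow> 'a::comm_monoid_add"
  shows "(\<Sum>j\<in>{lo..<hi}. g (lo + hi - 1 - j)) = sum g {lo..<hi}"
  by (rule sum.reindex_bij_witness[where i = "\<lambda>j. lo + hi - 1 - j" and j = "\<lambda>j. lo + hi - 1 - j"])
    auto

lemma sum_cprod_reflect:
  assumes "x > 0" "lo + hi = a - 1"
  shows "sum (cprod (1 / siter a x)) {lo..<hi} = sum (dprod x) {lo..<hi} / dprod x (a - 1)"
proof -
  have "a - 2 - j = lo + hi - 1 - j" for j using assms(2) by simp
  then have "sum (cprod (1 / siter a x)) {lo..<hi}
      = (\<Sum>j\<in>{lo..<hi}. dprod x (lo + hi - 1 - j)) / dprod x (a - 1)"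
    by (simp add: cprod_reflect[OF assms(1)] sum_divide_distrib)
  then show ?thesis by (simp only: sum_int_reflect)
qed

lemma sum_dprod_reflect:
  assumes "x > 0" "lo + hi = a - 1"
  shows "sum (dprod (1 / siter a x)) {lo..<hi} = sum (cprod x) {lo..<hi} / cprod x (a - 1)"
proof -
  have "a - 2 - j = lo + hi - 1 - j" for j using assms(2) by simp
  then have "sum (dprod (1 / siter a x)) {lo..<hi}
      = (\<Sum>j\<in>{lo..<hi}. cprod x (lo + hi - 1 - j)) / cprod x (a - 1)"
    by (simp add: dprod_reflect[OF assms(1)] sum_divide_distrib)
  then show ?thesis by (simp only: sum_int_reflect)
qed

lemma Mina_mul_Mina_reflect:
  assumes x: "x > 0" and "0 < p + r" and window: "int r - int p = a - 1"
  shows "Mina p r x * Mina p r (1 / siter a x)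
    = x * dprod x (a - 1) / (siter a x * cprod x (a - 1))"
proof -
  define A where "A = {- int p..<int r}"
  have A: "finite A" "A \<noteq> {}" unfolding A_def using assms(2) by auto
  have SC: "sum (cprod x) A > 0" and SD: "sum (dprod x) A > 0"
    using A by (auto intro!: sum_pos cprod_pos[OF x] dprod_pos[OF x])
  have "- int p + int r = a - 1" using window by simp
  note reflect = sum_cprod_reflect[OF x this] sum_dprod_reflect[OF x this]
  have y: "1 / siter a x > 0" using siter_pos[OF x] by simp
  show ?thesis
    unfolding Mina_eq_sum_ratio[OF x] Mina_eq_sum_ratio[OF y] reflect
    unfolding A_def[symmetric]
    using SC SD cprod_pos[OF x, of "a - 1"] dprod_pos[OF x, of "a - 1"] siter_pos[OF x, of a]
    by (simp add: field_simps)
qed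

theorem mainTheorem18:
  fixes k :: nat and x :: real
  assumes "k \<ge> 1" and "x > 0"
  shows "Mina k k x * Mina k k (1 / sfun x) = 1
         \<and> Mina (k + 1) k x * Mina (k + 1) k (inverse x) = 1"
proof
  have "Mina k k x * Mina k k (1 / siter 1 x) = x * (dfun x - 1) / (sfun x * (cfun x - 1))"
    using Mina_mul_Mina_reflect[OF assms(2), of k k 1] assms(1)
    by (simp add: cprod_def dprod_def cj_def dj_def)
  then show "Mina k k x * Mina k k (1 / sfun x) = 1"
    using dfun_cfun_ratio[OF assms(2)] sfun_pos[OF assms(2)] cfun_gt_one[OF assms(2)] by simp
  have "Mina (k + 1) k x * Mina (k + 1) k (1 / siter 0 x) = 1"
    using Mina_mul_Mina_reflect[OF assms(2), of "k + 1" k 0] assms(2)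
    by (simp add: cprod_def dprod_def)
  then show "Mina (k + 1) k x * Mina (k + 1) k (inverse x) = 1"
    by (simp add: inverse_eq_divide)
qed

end
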